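(* If $\mathrm{char}(\Bbbk)=3$, then $P$ is minimally generated by $h_1=yz-x^3-y^6z^2+xy^4z^3$, $h_2=z^3+xy^3+x^2yz-y^5z^4$ and $h_3=y^4+xy^2z+x^2z^2-y^4z^5$; in particular $\mu(P)=3$.
   Context: $\Bbbk$ is a field. $\rho:\Bbbk[[x,y,z]]\to\Bbbk[[t]]$ is the $\Bbbk$-algebra morphism with $\rho(x)=t^6+t^{31}$, $\rho(y)=t^8$, $\rho(z)=t^{10}$, and $P=\ker\rho$. $\mu(P)$ is the minimal number of generators of $P$. *)

theory Defs
  imports "HOL-Computational_Algebra.Formal_Power_Series"
begin

text \<open>Formal power series in three variables x,y,z over 'a, represented by their
coefficient functions: f (a,b,c) is the coefficient of x^a y^b z^c.\<close>

type_synonym 'a ps3 = "nat \<times> nat \<times> nat \<Rightarrow> 'a"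

definition ps3_add :: "'a::comm_ring_1 ps3 \<Rightarrow> 'a ps3 \<Rightarrow> 'a ps3" where
  "ps3_add f g = (\<lambda>e. f e + g e)"

definition ps3_mult :: "'a::comm_ring_1 ps3 \<Rightarrow> 'a ps3 \<Rightarrow> 'a ps3" where
  "ps3_mult f g = (\<lambda>(i,j,k). \<Sum>a\<le>i. \<Sum>b\<le>j. \<Sum>c\<le>k. f (a,b,c) * g (i-a, j-b, k-c))"

definition mon3 :: "nat \<Rightarrow> nat \<Rightarrow> nat \<Rightarrow> 'a::comm_ring_1 ps3" where
  "mon3 a b c = (\<lambda>e. if e = (a,b,c) then 1 else 0)"

definition ps3_ideal :: "'a::comm_ring_1 ps3 set \<Rightarrow> 'a ps3 set" where
  "ps3_ideal S = {f. \<exists>F c. finite F \<and> F \<subseteq> S \<and>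
                        f = (\<lambda>e. \<Sum>s\<in>F. ps3_mult (c s) s e)}"

definition mu3 :: "'a::comm_ring_1 ps3 set \<Rightarrow> nat" where
  "mu3 P = (LEAST n. \<exists>G. finite G \<and> card G = n \<and> ps3_ideal G = P)"

text \<open>The k-algebra morphism rho: k[[x,y,z]] \<rightarrow> k[[t]] with x \<mapsto> t^6+t^31,
  y \<mapsto> t^8, z \<mapsto> t^10 (continuous substitution; the coefficient of t^n only
  involves monomials x^a y^b z^c with a,b,c \<le> n).\<close>
definition rho :: "'a::comm_ring_1 ps3 \<Rightarrow> 'a fps" where
  "rho f = Abs_fps (\<lambda>n. \<Sum>a\<le>n. \<Sum>b\<le>n. \<Sum>c\<le>n.
      f (a,b,c) * fps_nth ((fps_X ^ 6 + fps_X ^ 31) ^ a * fps_X ^ (8*b + 10*c)) n)"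

definition Pker :: "'a::comm_ring_1 ps3 set" where
  "Pker = {f. rho f = 0}"

definition h1 :: "'a::comm_ring_1 ps3" where
  "h1 = (\<lambda>e. mon3 0 1 1 e - mon3 3 0 0 e - mon3 0 6 2 e + mon3 1 4 3 e)"

definition h2 :: "'a::comm_ring_1 ps3" where
  "h2 = (\<lambda>e. mon3 0 0 3 e + mon3 1 3 0 e + mon3 2 1 1 e - mon3 0 5 4 e)"

definition h3 :: "'a::comm_ring_1 ps3" where
  "h3 = (\<lambda>e. mon3 0 4 0 e + mon3 1 2 1 e + mon3 2 0 2 e - mon3 0 4 5 e)"

end

theory Submission
  imports Defs
begin

(*
  Give x, y, z the weights 6, 8, 10, the t-orders of their images. In characteristic 3 the
  images of h1, h2, h3 vanish. Their terms yz, z^3, y^4 are of strictly least weight once x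
  is given weight 7, so dividing by them (a recursion on that weight) writes every series as
  a combination of h1, h2, h3 plus a remainder supported on the normal monomials x^a y^j
  (j <= 3) and x^a z^k (k <= 2). The image of such a remainder is a sum of six series
  A(t^6 + t^31) t^e; after regrouping, their t-orders lie in distinct classes modulo 6, so the
  image vanishes only if the remainder does.
  Every element of the ideal vanishes at 1, y, y^2, y^3, z, z^2, so its coefficients at yz,
  z^3, y^4 depend only on the constant terms of the coefficients in a representation; since
  h1, h2, h3 take the values of the three unit vectors there, two generators cannot suffice.
*)

unbundle fps_syntax

lemma fps_three_eq_0: "(3::'a::comm_ring_1) = 0 \<Longrightarrow> (3::'a fps) = 0"
  by (metis fps_const_0_eq_0 numeral_fps_const)

lemma fps_sum_eq_0_distinct_subdegrees:
  fixes g :: "'i \<Rightarrow> 'a::comm_monoid_add fps"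
  assumes "finite I"
    and distinct: "\<And>i j. i \<in> I \<Longrightarrow> j \<in> I \<Longrightarrow> g i \<noteq> 0 \<Longrightarrow> g j \<noteq> 0 \<Longrightarrow>
                     subdegree (g i) = subdegree (g j) \<Longrightarrow> i = j"
    and sum_0: "(\<Sum>i\<in>I. g i) = 0"
  shows "\<forall>i\<in>I. g i = 0"
proof (rule ccontr)
  define S where "S = {i \<in> I. g i \<noteq> 0}"
  assume "\<not> (\<forall>i\<in>I. g i = 0)"
  then have "finite S" "S \<noteq> {}" using \<open>finite I\<close> by (auto simp: S_def)
  define i0 where "i0 = arg_min_on (\<lambda>i. subdegree (g i)) S"
  define d where "d = subdegree (g i0)"
  have i0: "i0 \<in> I" "g i0 \<noteq> 0" and least: "\<And>i. i \<in> S \<Longrightarrow> d \<le> subdegree (g i)"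
    using arg_min_if_finite[OF \<open>finite S\<close> \<open>S \<noteq> {}\<close>, of "\<lambda>i. subdegree (g i)"]
    by (auto simp: S_def i0_def d_def not_less)
  have others: "g i $ d = 0" if "i \<in> I - {i0}" for i
  proof (cases "g i = 0")
    case False
    then have "d < subdegree (g i)"
      using least[of i] distinct[of i i0] that i0 by (fastforce simp: S_def d_def)
    then show ?thesis by (rule nth_less_subdegree_zero)
  qed simp
  have "0 = (\<Sum>i\<in>I. g i) $ d" by (simp add: sum_0)
  also have "\<dots> = g i0 $ d + (\<Sum>i\<in>I - {i0}. g i $ d)"
    using \<open>finite I\<close> i0(1) by (simp add: fps_sum_nth sum.remove)
  also have "\<dots> = g i0 $ d" using others by simp
  finally show False using i0(2) by (simp add: d_def)
qed

lemma ps3_mult_eq_sum: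
  "ps3_mult f g (i, j, k) =
     (\<Sum>e\<in>{..i} \<times> {..j} \<times> {..k}. f e * g (case e of (a, b, c) \<Rightarrow> (i - a, j - b, k - c)))"
  unfolding ps3_mult_def sum.cartesian_product by (simp add: split_def)

lemma ps3_mult_mon3:
  "ps3_mult f (mon3 \<alpha> \<beta> \<gamma>) (i, j, k) =
     (if \<alpha> \<le> i \<and> \<beta> \<le> j \<and> \<gamma> \<le> k then f (i - \<alpha>, j - \<beta>, k - \<gamma>) else 0)"
proof -
  have "ps3_mult f (mon3 \<alpha> \<beta> \<gamma>) (i, j, k) =
      (\<Sum>e\<in>{..i} \<times> {..j} \<times> {..k}.
         if e = (i - \<alpha>, j - \<beta>, k - \<gamma>) \<and> \<alpha> \<le> i \<and> \<beta> \<le> j \<and> \<gamma> \<le> k then f e else 0)"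
    unfolding ps3_mult_eq_sum by (rule sum.cong) (auto simp: mon3_def)
  also have "\<dots> = (if \<alpha> \<le> i \<and> \<beta> \<le> j \<and> \<gamma> \<le> k then f (i - \<alpha>, j - \<beta>, k - \<gamma>) else 0)"
    by (auto simp: sum.delta')
  finally show ?thesis .
qed

lemma ps3_mult_mon3_0_left: "ps3_mult (mon3 0 0 0) g = g"
proof
  fix e :: "nat \<times> nat \<times> nat"
  obtain i j k where e: "e = (i, j, k)" by (cases e)
  have "ps3_mult (mon3 0 0 0) g (i, j, k) =
      (\<Sum>e\<in>{..i} \<times> {..j} \<times> {..k}. if e = (0, 0, 0) then g (i, j, k) else 0)"
    unfolding ps3_mult_eq_sum by (rule sum.cong) (auto simp: mon3_def)
  then show "ps3_mult (mon3 0 0 0) g e = g e" by (simp add: e sum.delta')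
qed

lemma ps3_mult_add_right: "ps3_mult f (\<lambda>e. g e + h e) = (\<lambda>e. ps3_mult f g e + ps3_mult f h e)"
  by (rule ext) (simp add: ps3_mult_def split_def algebra_simps sum.distrib)

lemma ps3_mult_diff_right: "ps3_mult f (\<lambda>e. g e - h e) = (\<lambda>e. ps3_mult f g e - ps3_mult f h e)"
  by (rule ext) (simp add: ps3_mult_def split_def algebra_simps sum_subtractf)

definition vanishes_below :: "'a::zero ps3 \<Rightarrow> nat \<times> nat \<times> nat \<Rightarrow> bool" where
  "vanishes_below g =
     (\<lambda>(i, j, k). \<forall>a\<le>i. \<forall>b\<le>j. \<forall>c\<le>k. (a, b, c) \<noteq> (i, j, k) \<longrightarrow> g (a, b, c) = 0)"

lemma ps3_mult_eq_const_times:
  assumes "vanishes_below g (i, j, k)"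
  shows "ps3_mult f g (i, j, k) = f (0, 0, 0) * g (i, j, k)"
proof -
  have "ps3_mult f g (i, j, k) =
      (\<Sum>e\<in>{..i} \<times> {..j} \<times> {..k}. if e = (0, 0, 0) then f (0, 0, 0) * g (i, j, k) else 0)"
    unfolding ps3_mult_eq_sum
  proof (rule sum.cong)
    fix e assume e_le: "e \<in> {..i} \<times> {..j} \<times> {..k}"
    obtain a b c where e: "e = (a, b, c)" by (cases e)
    show "f e * g (case e of (a, b, c) \<Rightarrow> (i - a, j - b, k - c)) =
        (if e = (0, 0, 0) then f (0, 0, 0) * g (i, j, k) else 0)"
    proof (cases "e = (0, 0, 0)")
      case False
      with e e_le have "(i - a, j - b, k - c) \<noteq> (i, j, k)" by auto
      then have "g (i - a, j - b, k - c) = 0"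
        using assms by (auto simp: vanishes_below_def)
      with False show ?thesis by (auto simp: e)
    qed simp
  qed simp
  then show ?thesis by (simp add: sum.delta')
qed

lemma ps3_ideal_generator: "s \<in> S \<Longrightarrow> s \<in> ps3_ideal S"
  unfolding ps3_ideal_def
  by (rule CollectI, rule exI[of _ "{s}"], rule exI[of _ "\<lambda>_. mon3 0 0 0"])
     (simp add: ps3_mult_mon3_0_left)

lemma ps3_ideal_combination3:
  assumes "s1 \<noteq> s2" "s1 \<noteq> s3" "s2 \<noteq> s3"
  shows "(\<lambda>e. ps3_mult c1 s1 e + ps3_mult c2 s2 e + ps3_mult c3 s3 e) \<in> ps3_ideal {s1, s2, s3}"
  unfolding ps3_ideal_def
  by (rule CollectI, rule exI[of _ "{s1, s2, s3}"],
      rule exI[of _ "\<lambda>s. if s = s1 then c1 else if s = s2 then c2 else c3"])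
     (use assms in \<open>auto simp: add.assoc\<close>)

lemma ps3_ideal_linear_part:
  assumes "g \<in> ps3_ideal G" "G \<subseteq> H" "finite H"
  shows "\<exists>\<alpha>. \<forall>m. (\<forall>s\<in>G. vanishes_below s m) \<longrightarrow> g m = (\<Sum>s\<in>H. \<alpha> s * s m)"
proof -
  obtain F c where F: "F \<subseteq> G" "g = (\<lambda>e. \<Sum>s\<in>F. ps3_mult (c s) s e)"
    using assms(1) unfolding ps3_ideal_def by blast
  define \<alpha> where "\<alpha> = (\<lambda>s. if s \<in> F then c s (0, 0, 0) else 0)"
  have "g m = (\<Sum>s\<in>H. \<alpha> s * s m)" if below: "\<forall>s\<in>G. vanishes_below s m" for m
  proof -
    obtain i j k where m: "m = (i, j, k)" by (cases m)
    have "(\<Sum>s\<in>H. \<alpha> s * s m) = (\<Sum>s\<in>F. ps3_mult (c s) s m)"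
    proof (rule sum.mono_neutral_cong_right)
      fix s assume "s \<in> F"
      with F(1) below have "vanishes_below s (i, j, k)" by (auto simp: m)
      with \<open>s \<in> F\<close> show "\<alpha> s * s m = ps3_mult (c s) s m"
        by (simp add: m \<alpha>_def ps3_mult_eq_const_times)
    qed (use assms F(1) in \<open>auto simp: \<alpha>_def\<close>)
    then show ?thesis by (simp add: F(2))
  qed
  then show ?thesis by blast
qed

section \<open>The substitution rho\<close>

definition rho_x :: "'a::comm_ring_1 fps" where
  "rho_x = fps_X ^ 6 + fps_X ^ 31"

definition rho_mon :: "nat \<times> nat \<times> nat \<Rightarrow> 'a::comm_ring_1 fps" where
  "rho_mon = (\<lambda>(a, b, c). rho_x ^ a * fps_X ^ (8 * b + 10 * c))"

definition mon_weight :: "nat \<times> nat \<times> nat \<Rightarrow> nat" where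
  "mon_weight = (\<lambda>(a, b, c). 6 * a + 8 * b + 10 * c)"

lemma rho_x_nth_0 [simp]: "rho_x $ 0 = 0"
  by (simp add: rho_x_def)

lemma rho_x_eq: "rho_x = fps_X ^ 6 * (1 + fps_X ^ 25 :: 'a::comm_ring_1 fps)"
  by (simp add: rho_x_def algebra_simps flip: power_add)

lemma subdegree_rho_x [simp]: "subdegree (rho_x :: 'a::{comm_ring_1, ring_no_zero_divisors} fps) = 6"
  by (rule subdegreeI) (auto simp: rho_x_def)

lemma rho_x_neq_0 [simp]: "(rho_x :: 'a::{comm_ring_1, ring_no_zero_divisors} fps) \<noteq> 0"
  using subdegree_rho_x[where 'a='a] by (metis subdegree_0 zero_neq_numeral)

lemma rho_mon_add:
  "(rho_mon (a + \<alpha>, b + \<beta>, c + \<gamma>) :: 'a::comm_ring_1 fps) = rho_mon (a, b, c) * rho_mon (\<alpha>, \<beta>, \<gamma>)"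
  by (simp add: rho_mon_def power_add algebra_simps)

lemma rho_mon_nth_below_weight:
  assumes "n < mon_weight e"
  shows "(rho_mon e :: 'a::comm_ring_1 fps) $ n = 0"
proof (cases e)
  case (fields a b c)
  have "(rho_x :: 'a fps) ^ a = fps_X ^ (6 * a) * (1 + fps_X ^ 25) ^ a"
    by (simp add: rho_x_eq power_mult_distrib power_mult)
  then have "(rho_mon e :: 'a fps) = fps_X ^ mon_weight e * (1 + fps_X ^ 25) ^ a"
    by (simp add: fields rho_mon_def mon_weight_def power_add algebra_simps)
  with assms show ?thesis by (simp add: fps_X_power_mult_nth)
qed

lemma rho_nth: "rho f $ n = (\<Sum>e\<in>{..n} \<times> {..n} \<times> {..n}. f e * rho_mon e $ n)"
  unfolding rho_def fps_nth_Abs_fps sum.cartesian_product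
  by (rule sum.cong) (auto simp: rho_mon_def rho_x_def)

lemma rho_nth_eq_sum:
  assumes "finite S" and support: "\<And>e. mon_weight e \<le> n \<Longrightarrow> f e \<noteq> 0 \<Longrightarrow> e \<in> S"
  shows "rho f $ n = (\<Sum>e\<in>S. f e * rho_mon e $ n)"
proof -
  let ?B = "{..n} \<times> {..n} \<times> {..n}"
  have B: "mon_weight e \<le> n \<Longrightarrow> e \<in> ?B" for e
    by (cases e) (auto simp: mon_weight_def)
  have vanish: "\<forall>e\<in>T - S \<inter> ?B. f e * rho_mon e $ n = 0" for T
  proof
    fix e assume "e \<in> T - S \<inter> ?B"
    show "f e * rho_mon e $ n = 0"
    proof (cases "mon_weight e \<le> n")
      case True
      with \<open>e \<in> T - S \<inter> ?B\<close> have "e \<notin> S" using B by blast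
      with True have "f e = 0" using support by blast
      then show ?thesis by simp
    qed (simp add: rho_mon_nth_below_weight)
  qed
  have "rho f $ n = (\<Sum>e\<in>S \<inter> ?B. f e * rho_mon e $ n)"
    unfolding rho_nth by (rule sum.mono_neutral_right) (use vanish in auto)
  also have "\<dots> = (\<Sum>e\<in>S. f e * rho_mon e $ n)"
    by (rule sum.mono_neutral_left) (use vanish \<open>finite S\<close> in auto)
  finally show ?thesis .
qed

lemma rho_add: "rho (\<lambda>e. f e + g e) = rho f + rho g"
  by (rule fps_ext) (simp add: rho_nth algebra_simps sum.distrib)

lemma rho_diff: "rho (\<lambda>e. f e - g e) = rho f - rho g"
  by (rule fps_ext) (simp add: rho_nth algebra_simps sum_subtractf)

lemma rho_sum: "rho (\<lambda>e. \<Sum>s\<in>F. g s e) = (\<Sum>s\<in>F. rho (g s))"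
  by (rule fps_ext) (simp add: rho_nth fps_sum_nth sum_distrib_right sum.swap[of _ F])

lemma rho_mult_mon3:
  "rho (ps3_mult f (mon3 \<alpha> \<beta> \<gamma>)) = rho f * (rho_mon (\<alpha>, \<beta>, \<gamma>) :: 'a::comm_ring_1 fps)"
proof (rule fps_ext)
  fix n :: nat
  let ?B = "{..n} \<times> {..n} \<times> {..n}" and ?M = "rho_mon (\<alpha>, \<beta>, \<gamma>) :: 'a fps"
  define g where "g = ps3_mult f (mon3 \<alpha> \<beta> \<gamma>)"
  define shift where "shift = (\<lambda>(a, b, c). (a + \<alpha>, b + \<beta>, c + \<gamma>::nat))"
  have g: "g (i, j, k) = (if \<alpha> \<le> i \<and> \<beta> \<le> j \<and> \<gamma> \<le> k then f (i - \<alpha>, j - \<beta>, k - \<gamma>) else 0)"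
    for i j k unfolding g_def by (rule ps3_mult_mon3)
  have "rho g $ n = (\<Sum>e\<in>shift ` ?B. g e * rho_mon e $ n)"
  proof (rule rho_nth_eq_sum)
    fix e assume "mon_weight e \<le> n" "g e \<noteq> 0"
    then obtain i j k where "e = (i, j, k)" "\<alpha> \<le> i" "\<beta> \<le> j" "\<gamma> \<le> k" "i \<le> n" "j \<le> n" "k \<le> n"
      using g by (cases e) (auto simp: mon_weight_def split: if_splits)
    then have "(i - \<alpha>, j - \<beta>, k - \<gamma>) \<in> ?B" "e = shift (i - \<alpha>, j - \<beta>, k - \<gamma>)"
      by (auto simp: shift_def)
    then show "e \<in> shift ` ?B" by blast
  qed simp
  also have "\<dots> = (\<Sum>e\<in>?B. g (shift e) * rho_mon (shift e) $ n)"
    by (rule sum.reindex_cong[where l=shift]) (auto simp: inj_on_def shift_def)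
  also have "\<dots> = (\<Sum>e\<in>?B. f e * (rho_mon e * ?M) $ n)"
    by (rule sum.cong) (auto simp: shift_def g rho_mon_add)
  also have "\<dots> = (\<Sum>m=0..n. \<Sum>e\<in>?B. f e * rho_mon e $ m * ?M $ (n - m))"
    by (simp add: fps_mult_nth sum_distrib_left mult.assoc sum.swap[of _ ?B])
  also have "\<dots> = (\<Sum>m=0..n. rho f $ m * ?M $ (n - m))"
  proof (rule sum.cong)
    fix m assume "m \<in> {0..n}"
    then have "rho f $ m = (\<Sum>e\<in>?B. f e * rho_mon e $ m)"
      by (intro rho_nth_eq_sum) (auto simp: mon_weight_def)
    then show "(\<Sum>e\<in>?B. f e * rho_mon e $ m * ?M $ (n - m)) = rho f $ m * ?M $ (n - m)"
      by (simp add: sum_distrib_right)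
  qed simp
  finally show "rho (ps3_mult f (mon3 \<alpha> \<beta> \<gamma>)) $ n = (rho f * ?M) $ n"
    unfolding fps_mult_nth g_def[symmetric] .
qed

definition x_series :: "'a::comm_ring_1 fps \<Rightarrow> 'a ps3" where
  "x_series A = (\<lambda>(a, b, c). if b = 0 \<and> c = 0 then A $ a else 0)"

lemma rho_x_series: "rho (x_series A) = A oo (rho_x :: 'a::comm_ring_1 fps)"
proof (rule fps_ext)
  fix n :: nat
  have "rho (x_series A) $ n = (\<Sum>e\<in>(\<lambda>a. (a, 0, 0)) ` {0..n}. x_series A e * rho_mon e $ n)"
  proof (rule rho_nth_eq_sum)
    fix e assume "mon_weight e \<le> n" "x_series A e \<noteq> 0"
    then show "e \<in> (\<lambda>a. (a, 0, 0)) ` {0..n}"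
      by (cases e) (auto simp: x_series_def mon_weight_def split: if_splits)
  qed simp
  also have "\<dots> = (\<Sum>a=0..n. A $ a * (rho_x ^ a) $ n)"
    by (subst sum.reindex) (auto simp: inj_on_def x_series_def rho_mon_def)
  also have "\<dots> = (A oo rho_x) $ n" by (simp add: fps_compose_nth)
  finally show "rho (x_series A) $ n = (A oo rho_x) $ n" .
qed

lemma fps_compose_X_power_mult_rho_x:
  "(fps_X ^ k * A) oo rho_x = rho_x ^ k * (A oo (rho_x :: 'a::idom fps))"
  by (simp add: fps_compose_mult_distrib fps_compose_power[symmetric])

lemma subdegree_compose_rho_x_mult:
  fixes C Q :: "'a::idom fps"
  assumes "C \<noteq> 0" "Q \<noteq> 0"
  shows "(C oo rho_x) * Q \<noteq> 0" "subdegree ((C oo rho_x) * Q) = 6 * subdegree C + subdegree Q"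
  using assms by (simp_all add: fps_compose_eq_0_iff)

lemma ps3_mult_h1:
  "ps3_mult f h1 (i, j, k) = (if 1 \<le> j \<and> 1 \<le> k then f (i, j - 1, k - 1) else 0)
     - (if 3 \<le> i then f (i - 3, j, k) else 0) - (if 6 \<le> j \<and> 2 \<le> k then f (i, j - 6, k - 2) else 0)
     + (if 1 \<le> i \<and> 4 \<le> j \<and> 3 \<le> k then f (i - 1, j - 4, k - 3) else 0)"
  unfolding h1_def ps3_mult_add_right ps3_mult_diff_right ps3_mult_mon3 by simp

lemma ps3_mult_h2:
  "ps3_mult f h2 (i, j, k) = (if 3 \<le> k then f (i, j, k - 3) else 0)
     + (if 1 \<le> i \<and> 3 \<le> j then f (i - 1, j - 3, k) else 0)
     + (if 2 \<le> i \<and> 1 \<le> j \<and> 1 \<le> k then f (i - 2, j - 1, k - 1) else 0)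
     - (if 5 \<le> j \<and> 4 \<le> k then f (i, j - 5, k - 4) else 0)"
  unfolding h2_def ps3_mult_add_right ps3_mult_diff_right ps3_mult_mon3 by simp

lemma ps3_mult_h3:
  "ps3_mult f h3 (i, j, k) = (if 4 \<le> j then f (i, j - 4, k) else 0)
     + (if 1 \<le> i \<and> 2 \<le> j \<and> 1 \<le> k then f (i - 1, j - 2, k - 1) else 0)
     + (if 2 \<le> i \<and> 2 \<le> k then f (i - 2, j, k - 2) else 0)
     - (if 4 \<le> j \<and> 5 \<le> k then f (i, j - 4, k - 5) else 0)"
  unfolding h3_def ps3_mult_add_right ps3_mult_diff_right ps3_mult_mon3 by simp

lemma h_values:
  "h1 (0, 1, 1) = (1::'a::comm_ring_1)" "h1 (0, 0, 3) = (0::'a)" "h1 (0, 4, 0) = (0::'a)"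
  "h2 (0, 1, 1) = (0::'a)" "h2 (0, 0, 3) = (1::'a)" "h2 (0, 4, 0) = (0::'a)"
  "h3 (0, 1, 1) = (0::'a)" "h3 (0, 0, 3) = (0::'a)" "h3 (0, 4, 0) = (1::'a)"
  by (simp_all add: h1_def h2_def h3_def mon3_def)

lemma h_distinct: "(h1::'a::field ps3) \<noteq> h2" "(h1::'a ps3) \<noteq> h3" "(h2::'a ps3) \<noteq> h3"
  using h_values(1,4,7,5,8)[where 'a='a] by (metis zero_neq_one)+

lemma rho_mult_h_eq_0:
  assumes "(3::'a::comm_ring_1) = 0" "h \<in> {h1, h2, h3}"
  shows "rho (ps3_mult f h) = (0 :: 'a fps)"
proof -
  have "rho (ps3_mult f h1) =
      rho f * (rho_mon (0, 1, 1) - rho_mon (3, 0, 0) - rho_mon (0, 6, 2) + rho_mon (1, 4, 3))"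
    unfolding h1_def ps3_mult_add_right ps3_mult_diff_right rho_add rho_diff rho_mult_mon3
    by (simp add: algebra_simps)
  also have "rho_mon (0, 1, 1) - rho_mon (3, 0, 0) - rho_mon (0, 6, 2) + rho_mon (1, 4, 3) =
      3 * (- (fps_X ^ 43) - fps_X ^ 68 :: 'a fps)"
    by (simp add: rho_mon_def rho_x_def power2_eq_square power3_eq_cube algebra_simps flip: power_add)
  finally have 1: "rho (ps3_mult f h1) = 0" using fps_three_eq_0[OF assms(1)] by simp
  have "rho (ps3_mult f h2) =
      rho f * (rho_mon (0, 0, 3) + rho_mon (1, 3, 0) + rho_mon (2, 1, 1) - rho_mon (0, 5, 4))"
    unfolding h2_def ps3_mult_add_right ps3_mult_diff_right rho_add rho_diff rho_mult_mon3
    by (simp add: algebra_simps)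
  also have "rho_mon (0, 0, 3) + rho_mon (1, 3, 0) + rho_mon (2, 1, 1) - rho_mon (0, 5, 4) =
      3 * (fps_X ^ 30 + fps_X ^ 55 :: 'a fps)"
    by (simp add: rho_mon_def rho_x_def power2_eq_square power3_eq_cube algebra_simps flip: power_add)
  finally have 2: "rho (ps3_mult f h2) = 0" using fps_three_eq_0[OF assms(1)] by simp
  have "rho (ps3_mult f h3) =
      rho f * (rho_mon (0, 4, 0) + rho_mon (1, 2, 1) + rho_mon (2, 0, 2) - rho_mon (0, 4, 5))"
    unfolding h3_def ps3_mult_add_right ps3_mult_diff_right rho_add rho_diff rho_mult_mon3
    by (simp add: algebra_simps)
  also have "rho_mon (0, 4, 0) + rho_mon (1, 2, 1) + rho_mon (2, 0, 2) - rho_mon (0, 4, 5) =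
      3 * (fps_X ^ 32 + fps_X ^ 57 :: 'a fps)"
    by (simp add: rho_mon_def rho_x_def power2_eq_square power3_eq_cube algebra_simps flip: power_add)
  finally have 3: "rho (ps3_mult f h3) = 0" using fps_three_eq_0[OF assms(1)] by simp
  from 1 2 3 assms(2) show ?thesis by blast
qed

section \<open>Division by the generators\<close>

definition normal_mon :: "nat \<times> nat \<times> nat \<Rightarrow> bool" where
  "normal_mon = (\<lambda>(a, b, c). (b = 0 \<and> c \<le> 2) \<or> (c = 0 \<and> b \<le> 3))"

text \<open>Division by the standard basis: the leading monomials yz, z^3, y^4 of h1, h2, h3 have
  strictly smaller weight 7a + 8b + 10c than their other terms. The reduced coefficient at m is
  the coefficient of f minus the contributions at m of those other terms, each multiplied by the
  quotient coefficient (a reduced coefficient at a monomial of smaller weight) that lands on m.\<close>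

function reduced_coeff :: "'a::comm_ring_1 ps3 \<Rightarrow> nat \<times> nat \<times> nat \<Rightarrow> 'a" where
  "reduced_coeff f (a, b, c) = f (a, b, c)
    - ((if 3 \<le> a then - reduced_coeff f (a - 3, b + 1, c + 1) else 0)
     + (if 6 \<le> b \<and> 2 \<le> c then - reduced_coeff f (a, b - 5, c - 1) else 0)
     + (if 1 \<le> a \<and> 4 \<le> b \<and> 3 \<le> c then reduced_coeff f (a - 1, b - 3, c - 2) else 0)
     + (if 1 \<le> a \<and> b = 3 then reduced_coeff f (a - 1, 0, c + 3) else 0)
     + (if 2 \<le> a \<and> b = 1 \<and> 1 \<le> c then reduced_coeff f (a - 2, 0, c + 2) else 0)
     + (if b = 5 \<and> 4 \<le> c then - reduced_coeff f (a, 0, c - 1) else 0)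
     + (if 1 \<le> a \<and> 2 \<le> b \<and> c = 1 then reduced_coeff f (a - 1, b + 2, 0) else 0)
     + (if 2 \<le> a \<and> c = 2 then reduced_coeff f (a - 2, b + 4, 0) else 0)
     + (if 4 \<le> b \<and> c = 5 then - reduced_coeff f (a, b, 0) else 0))"
  by pat_completeness auto
termination
  by (relation "measure (\<lambda>(f, (a, b, c)). 7 * a + 8 * b + 10 * c)") auto

declare reduced_coeff.simps [simp del]

definition quot1 :: "'a::comm_ring_1 ps3 \<Rightarrow> 'a ps3" where
  "quot1 f = (\<lambda>(a, b, c). reduced_coeff f (a, b + 1, c + 1))"

definition quot2 :: "'a::comm_ring_1 ps3 \<Rightarrow> 'a ps3" where
  "quot2 f = (\<lambda>(a, b, c). if b = 0 then reduced_coeff f (a, 0, c + 3) else 0)"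

definition quot3 :: "'a::comm_ring_1 ps3 \<Rightarrow> 'a ps3" where
  "quot3 f = (\<lambda>(a, b, c). if c = 0 then reduced_coeff f (a, b + 4, 0) else 0)"

definition remainder :: "'a::comm_ring_1 ps3 \<Rightarrow> 'a ps3" where
  "remainder f = (\<lambda>m. if normal_mon m then reduced_coeff f m else 0)"

lemma remainder_normal: "remainder f m \<noteq> 0 \<Longrightarrow> normal_mon m"
  by (auto simp: remainder_def split: if_splits)

lemma division_identity:
  "f m = ps3_mult (quot1 f) h1 m + ps3_mult (quot2 f) h2 m + ps3_mult (quot3 f) h3 m + remainder f m"
proof -
  obtain a b c where m: "m = (a, b, c)" by (cases m)
  let ?E = "reduced_coeff f"
  have sub: "6 \<le> b \<Longrightarrow> Suc (b - 6) = b - 5" "4 \<le> b \<Longrightarrow> Suc (b - 4) = b - 3"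
    "3 \<le> c \<Longrightarrow> Suc (c - 3) = c - 2" "2 \<le> c \<Longrightarrow> Suc (c - 2) = c - 1"
    "2 \<le> c \<Longrightarrow> \<not> 3 \<le> c \<Longrightarrow> c - Suc 0 = Suc 0" by auto
  have 1: "ps3_mult (quot1 f) h1 (a, b, c) = (if 1 \<le> b \<and> 1 \<le> c then ?E (a, b, c) else 0)
     + ((if 3 \<le> a then - ?E (a - 3, b + 1, c + 1) else 0)
     + (if 6 \<le> b \<and> 2 \<le> c then - ?E (a, b - 5, c - 1) else 0)
     + (if 1 \<le> a \<and> 4 \<le> b \<and> 3 \<le> c then ?E (a - 1, b - 3, c - 2) else 0))"
    by (auto simp: ps3_mult_h1 quot1_def sub)
  have 2: "ps3_mult (quot2 f) h2 (a, b, c) = (if b = 0 \<and> 3 \<le> c then ?E (a, b, c) else 0)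
     + ((if 1 \<le> a \<and> b = 3 then ?E (a - 1, 0, c + 3) else 0)
     + (if 2 \<le> a \<and> b = 1 \<and> 1 \<le> c then ?E (a - 2, 0, c + 2) else 0)
     + (if b = 5 \<and> 4 \<le> c then - ?E (a, 0, c - 1) else 0))"
    by (auto simp: ps3_mult_h2 quot2_def)
  have 3: "ps3_mult (quot3 f) h3 (a, b, c) = (if c = 0 \<and> 4 \<le> b then ?E (a, b, c) else 0)
     + ((if 1 \<le> a \<and> 2 \<le> b \<and> c = 1 then ?E (a - 1, b + 2, 0) else 0)
     + (if 2 \<le> a \<and> c = 2 then ?E (a - 2, b + 4, 0) else 0)
     + (if 4 \<le> b \<and> c = 5 then - ?E (a, b, 0) else 0))"
    by (auto simp: ps3_mult_h3 quot3_def)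
  have leading: "(if 1 \<le> b \<and> 1 \<le> c then ?E (a, b, c) else 0) + (if b = 0 \<and> 3 \<le> c then ?E (a, b, c) else 0)
      + (if c = 0 \<and> 4 \<le> b then ?E (a, b, c) else 0) + remainder f (a, b, c) = ?E (a, b, c)"
    by (auto simp: remainder_def normal_mon_def)
  show ?thesis
    unfolding m 1 2 3 using leading reduced_coeff.simps[of f a b c] by (simp add: algebra_simps)
qed

section \<open>Normal forms\<close>

definition normal_yz :: "(nat \<times> nat) set" where
  "normal_yz = {(0, 0), (1, 0), (2, 0), (3, 0), (0, 1), (0, 2)}"

lemma normal_mon_iff: "normal_mon (a, b, c) \<longleftrightarrow> (b, c) \<in> normal_yz"
  by (auto simp: normal_mon_def normal_yz_def)

definition column :: "'a::comm_ring_1 ps3 \<Rightarrow> nat \<Rightarrow> nat \<Rightarrow> 'a fps" where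
  "column r b c = Abs_fps (\<lambda>a. r (a, b, c))"

lemma ps3_mult_x_series_column:
  "ps3_mult (x_series (column r b c)) (mon3 0 b c) (i, j, k) = (if j = b \<and> k = c then r (i, b, c) else 0)"
  by (auto simp: ps3_mult_mon3 x_series_def column_def)

lemma rho_slice:
  "rho (ps3_mult (x_series (column r b c)) (mon3 0 b c)) =
     (column r b c oo rho_x) * (fps_X ^ (8 * b + 10 * c) :: 'a::comm_ring_1 fps)"
  by (simp add: rho_mult_mon3 rho_x_series rho_mon_def)

lemma normal_eq_sum_slices:
  assumes "\<And>e. r e \<noteq> 0 \<Longrightarrow> normal_mon e"
  shows "r = (\<lambda>e. \<Sum>(b, c)\<in>normal_yz. ps3_mult (x_series (column r b c)) (mon3 0 b c) e)"
proof
  fix e :: "nat \<times> nat \<times> nat"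
  obtain i j k where e: "e = (i, j, k)" by (cases e)
  have "r (i, j, k) = 0" if "(j, k) \<notin> normal_yz"
    using that assms[of "(i, j, k)"] normal_mon_iff by blast
  then show "r e = (\<Sum>(b, c)\<in>normal_yz. ps3_mult (x_series (column r b c)) (mon3 0 b c) e)"
    by (auto simp: e ps3_mult_x_series_column normal_yz_def)
qed

lemma rho_x_power_corrections:
  assumes "(3::'a::comm_ring_1) = 0"
  shows "fps_X ^ 24 - rho_x ^ 4 = - (fps_X ^ 49 + fps_X ^ 99 + fps_X ^ 124 :: 'a fps)"
    and "fps_X ^ 20 - rho_x ^ 2 * fps_X ^ 8 = fps_X ^ 45 - (fps_X ^ 70 :: 'a fps)"
    and "fps_X ^ 16 - rho_x * fps_X ^ 10 = - (fps_X ^ 41 :: 'a fps)"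
proof -
  have "(rho_x :: 'a fps) ^ 4 = rho_x ^ 2 * rho_x ^ 2" by (simp flip: power_add)
  then have "fps_X ^ 24 - rho_x ^ 4 =
      - (fps_X ^ 49 + fps_X ^ 99 + fps_X ^ 124) + 3 * (- (fps_X ^ 49) - 2 * fps_X ^ 74 - fps_X ^ 99 :: 'a fps)"
    by (simp add: rho_x_def power2_eq_square algebra_simps flip: power_add)
  then show "fps_X ^ 24 - rho_x ^ 4 = - (fps_X ^ 49 + fps_X ^ 99 + fps_X ^ 124 :: 'a fps)"
    using fps_three_eq_0[OF assms(1)] by simp
  have "fps_X ^ 20 - rho_x ^ 2 * fps_X ^ 8 = fps_X ^ 45 - fps_X ^ 70 + 3 * (- (fps_X ^ 45) :: 'a fps)"
    by (simp add: rho_x_def power2_eq_square algebra_simps flip: power_add)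
  then show "fps_X ^ 20 - rho_x ^ 2 * fps_X ^ 8 = fps_X ^ 45 - (fps_X ^ 70 :: 'a fps)"
    using fps_three_eq_0[OF assms(1)] by simp
  show "fps_X ^ 16 - rho_x * fps_X ^ 10 = - (fps_X ^ 41 :: 'a fps)"
    by (simp add: rho_x_def algebra_simps flip: power_add)
qed

lemma rho_eq_0_imp_normal_eq_0:
  fixes r :: "'a::field ps3"
  assumes "(3::'a) = 0" and normal: "\<And>e. r e \<noteq> 0 \<Longrightarrow> normal_mon e" and "rho r = 0"
  shows "r e = 0"
proof -
  let ?A = "\<lambda>b c. column r b c oo rho_x"
  have rho_r: "rho r = ?A 0 0 + ?A 1 0 * fps_X ^ 8 + ?A 2 0 * fps_X ^ 16 + ?A 3 0 * fps_X ^ 24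
      + ?A 0 1 * fps_X ^ 10 + ?A 0 2 * fps_X ^ 20"
  proof -
    have "r = (\<lambda>e. \<Sum>(b, c)\<in>normal_yz. ps3_mult (x_series (column r b c)) (mon3 0 b c) e)"
      using normal by (rule normal_eq_sum_slices)
    from arg_cong[where f=rho, OF this] show ?thesis
      unfolding rho_sum by (simp add: rho_slice normal_yz_def)
  qed
  (* The orders 0, 24 and 8, 20 and 10, 16 of the six monomial images collide modulo 6.
     Moving rho_x^k into the partner column leaves the correction series Q 1, Q 3, Q 5 of
     orders 49, 45, 41, so that the six summands have distinct orders modulo 6. *)
  define C where "C = (\<lambda>i::nat. [column r 0 0 + fps_X ^ 4 * column r 3 0, column r 3 0,
      column r 1 0 + fps_X ^ 2 * column r 0 2, column r 0 2,
      column r 0 1 + fps_X * column r 2 0, column r 2 0] ! i)"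
  define Q where "Q = (\<lambda>i::nat. [1, fps_X ^ 24 - rho_x ^ 4, fps_X ^ 8, fps_X ^ 20 - rho_x ^ 2 * fps_X ^ 8,
      fps_X ^ 10, fps_X ^ 16 - rho_x * fps_X ^ 10] ! i :: 'a fps)"
  have six: "(\<Sum>i<6. g i) = g 0 + g 1 + g 2 + g 3 + g 4 + g 5" for g :: "nat \<Rightarrow> 'a fps"
    by (simp add: eval_nat_numeral)
  have "(\<Sum>i<6. (C i oo rho_x) * Q i) = rho r"
    unfolding six rho_r
    by (simp add: C_def Q_def fps_compose_add_distrib fps_compose_X_power_mult_rho_x
        fps_compose_X_power_mult_rho_x[of 1, simplified]) (simp add: algebra_simps)
  then have sum_0: "(\<Sum>i<6. (C i oo rho_x) * Q i) = 0" using assms(3) by simp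
  have orders: "Q i \<noteq> 0 \<and> subdegree (Q i) mod 6 = i" if "i < 6" for i
  proof -
    define d :: nat where "d = [0, 49, 8, 45, 10, 41] ! i"
    from \<open>i < 6\<close> have "i \<in> {0, 1, 2, 3, 4, 5}" by auto
    then have Qd: "Q i $ d \<noteq> 0" "\<And>n. n < d \<Longrightarrow> Q i $ n = 0" "d mod 6 = i"
      by (auto simp: d_def Q_def rho_x_power_corrections[OF assms(1)])
    have "subdegree (Q i) = d" using Qd(1,2) by (rule subdegreeI)
    moreover have "Q i \<noteq> 0" using Qd(1) by (rule fps_nonzeroI)
    ultimately show ?thesis using Qd(3) by simp
  qed
  have terms_0: "\<forall>i\<in>{..<6}. (C i oo rho_x) * Q i = 0"
  proof (rule fps_sum_eq_0_distinct_subdegrees[OF _ _ sum_0])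
    fix i j assume ij: "i \<in> {..<6}" "j \<in> {..<6}" "(C i oo rho_x) * Q i \<noteq> 0" "(C j oo rho_x) * Q j \<noteq> 0"
      and eq: "subdegree ((C i oo rho_x) * Q i) = subdegree ((C j oo rho_x) * Q j)"
    from ij(3,4) have "C i \<noteq> 0" "C j \<noteq> 0" by auto
    with ij(1,2) orders[of i] orders[of j]
    have "subdegree ((C i oo rho_x) * Q i) mod 6 = i" "subdegree ((C j oo rho_x) * Q j) mod 6 = j"
      by (simp_all add: subdegree_compose_rho_x_mult)
    with eq show "i = j" by metis
  qed simp
  have C_0: "C i = 0" if "i < 6" for i
  proof (rule ccontr)
    assume "C i \<noteq> 0"
    with orders[OF that] have "(C i oo rho_x) * Q i \<noteq> 0"
      using subdegree_compose_rho_x_mult(1) by blast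
    with terms_0 that show False by simp
  qed
  have columns_0: "column r b c = 0" if "(b, c) \<in> normal_yz" for b c
  proof -
    have "column r 3 0 = 0" "column r 0 2 = 0" "column r 2 0 = 0"
      using C_0[of 1] C_0[of 3] C_0[of 5] by (simp_all add: C_def)
    moreover from this have "column r 0 0 = 0" "column r 1 0 = 0" "column r 0 1 = 0"
      using C_0[of 0] C_0[of 2] C_0[of 4] by (simp_all add: C_def)
    ultimately show ?thesis using that by (auto simp: normal_yz_def)
  qed
  obtain i j k where e: "e = (i, j, k)" by (cases e)
  show "r e = 0"
  proof (rule ccontr)
    assume "r e \<noteq> 0"
    then have "(j, k) \<in> normal_yz" using normal[of "(i, j, k)"] by (simp add: e normal_mon_iff)
    then have "column r j k $ i = 0" by (simp add: columns_0)
    with \<open>r e \<noteq> 0\<close> show False by (simp add: e column_def)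
  qed
qed

lemma ps3_ideal_h_subset_Pker:
  assumes "(3::'a::comm_ring_1) = 0" "f \<in> ps3_ideal {h1, h2, h3 :: 'a ps3}"
  shows "rho f = 0"
proof -
  obtain F c where "F \<subseteq> {h1, h2, h3}" "f = (\<lambda>e. \<Sum>s\<in>F. ps3_mult (c s) s e)"
    using assms(2) unfolding ps3_ideal_def by blast
  then show ?thesis
    using rho_mult_h_eq_0[OF assms(1)] by (auto simp: rho_sum intro: sum.neutral)
qed

lemma Pker_subset_ps3_ideal_h:
  fixes f :: "'a::field ps3"
  assumes "(3::'a::field) = 0" "rho f = 0"
  shows "f \<in> ps3_ideal {h1, h2, h3}"
proof -
  have f: "f = (\<lambda>e. ps3_mult (quot1 f) h1 e + ps3_mult (quot2 f) h2 e + ps3_mult (quot3 f) h3 e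
                   + remainder f e)"
    by (rule ext) (rule division_identity)
  have "rho (ps3_mult (quot1 f) h1) = 0" "rho (ps3_mult (quot2 f) h2) = 0"
    "rho (ps3_mult (quot3 f) h3) = 0"
    using rho_mult_h_eq_0[OF assms(1)] by auto
  then have "rho (remainder f) = 0"
    using arg_cong[where f=rho, OF f] assms(2) by (simp add: rho_add)
  then have "remainder f e = 0" for e
    by (intro rho_eq_0_imp_normal_eq_0[OF assms(1)] remainder_normal)
  then have eq: "f = (\<lambda>e. ps3_mult (quot1 f) h1 e + ps3_mult (quot2 f) h2 e + ps3_mult (quot3 f) h3 e)"
    using division_identity[of f] by (intro ext) simp
  show ?thesis by (subst eq) (rule ps3_ideal_combination3[OF h_distinct])
qed

lemma ps3_ideal_h_eq_Pker:
  assumes "(3::'a::field) = 0"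
  shows "ps3_ideal {h1, h2, h3} = (Pker :: 'a ps3 set)"
  unfolding Pker_def using ps3_ideal_h_subset_Pker[OF assms] Pker_subset_ps3_ideal_h[OF assms] by blast

section \<open>Minimality\<close>

lemma vanishes_below_if_vanishes_low:
  assumes "\<And>j. j \<le> 3 \<Longrightarrow> g (0, j, 0) = 0" and "\<And>k. k \<le> 2 \<Longrightarrow> g (0, 0, k) = 0"
  shows "j \<le> 4 \<Longrightarrow> vanishes_below g (0, j, 0)" "k \<le> 3 \<Longrightarrow> vanishes_below g (0, 0, k)"
    and "vanishes_below g (0, 1, 1)"
  using assms by (auto simp: vanishes_below_def le_Suc_eq)

lemma ps3_ideal_h_vanishes_low:
  assumes "g \<in> ps3_ideal {h1, h2, h3 :: 'a::comm_ring_1 ps3}"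
  shows "j \<le> 3 \<Longrightarrow> g (0, j, 0) = 0" and "k \<le> 2 \<Longrightarrow> g (0, 0, k) = 0"
proof -
  have "finite {h1, h2, h3 :: 'a ps3}" by simp
  from ps3_ideal_linear_part[OF assms order_refl this] obtain \<alpha>
    where \<alpha>: "\<forall>m. (\<forall>s\<in>{h1, h2, h3 :: 'a ps3}. vanishes_below s m) \<longrightarrow>
      g m = (\<Sum>s\<in>{h1, h2, h3}. \<alpha> s * s m)"
    by blast
  have y: "s (0, j, 0) = 0" if "s \<in> {h1, h2, h3}" "j \<le> 3" for s :: "'a ps3" and j
    using that by (auto simp: h1_def h2_def h3_def mon3_def)
  have z: "s (0, 0, k) = 0" if "s \<in> {h1, h2, h3}" "k \<le> 2" for s :: "'a ps3" and k
    using that by (auto simp: h1_def h2_def h3_def mon3_def)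
  show "g (0, j, 0) = 0" if "j \<le> 3"
  proof -
    have "vanishes_below s (0, j, 0)" if "s \<in> {h1, h2, h3}" for s :: "'a ps3"
      using \<open>j \<le> 3\<close> y[OF that] z[OF that] by (intro vanishes_below_if_vanishes_low(1)) auto
    then have "g (0, j, 0) = (\<Sum>s\<in>{h1, h2, h3}. \<alpha> s * s (0, j, 0))" using \<alpha> by blast
    also have "\<dots> = 0" by (intro sum.neutral ballI) (simp add: y \<open>j \<le> 3\<close>)
    finally show ?thesis .
  qed
  show "g (0, 0, k) = 0" if "k \<le> 2"
  proof -
    have "vanishes_below s (0, 0, k)" if "s \<in> {h1, h2, h3}" for s :: "'a ps3"
      using \<open>k \<le> 2\<close> y[OF that] z[OF that] by (intro vanishes_below_if_vanishes_low(2)) auto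
    then have "g (0, 0, k) = (\<Sum>s\<in>{h1, h2, h3}. \<alpha> s * s (0, 0, k))" using \<alpha> by blast
    also have "\<dots> = 0" by (intro sum.neutral ballI) (simp add: z \<open>k \<le> 2\<close>)
    finally show ?thesis .
  qed
qed

lemma subset_doubleton_if_card_le_2:
  assumes "finite A" "card A \<le> 2"
  obtains p q where "A \<subseteq> {p, q}"
proof -
  from assms(2) have "card A = 0 \<or> card A = 1 \<or> card A = 2" by auto
  with assms(1) have "\<exists>p q. A \<subseteq> {p, q}"
    by (auto simp: card_1_singleton_iff card_2_iff)
  then show ?thesis using that by blast
qed

text \<open>The values of f, g, h at x, y, z form the identity matrix, whereas a matrix whose rows
  lie in the span of two vectors has vanishing determinant.\<close>

lemma unit_vectors_not_in_span_of_two: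
  fixes p q f g h :: "'b \<Rightarrow> 'a::comm_ring_1"
  assumes span: "\<And>u. u \<in> {f, g, h} \<Longrightarrow> \<exists>\<alpha> \<beta>. \<forall>m\<in>{x, y, z}. u m = \<alpha> * p m + \<beta> * q m"
    and "f x = 1" "f y = 0" "f z = 0"
    and "g x = 0" "g y = 1" "g z = 0"
    and "h x = 0" "h y = 0" "h z = 1"
  shows "(0::'a) = 1"
proof -
  obtain a1 b1 where f: "\<forall>m\<in>{x, y, z}. f m = a1 * p m + b1 * q m" using span by blast
  obtain a2 b2 where g: "\<forall>m\<in>{x, y, z}. g m = a2 * p m + b2 * q m" using span by blast
  obtain a3 b3 where h: "\<forall>m\<in>{x, y, z}. h m = a3 * p m + b3 * q m" using span by blast
  have "f x * (g y * h z - g z * h y) - f y * (g x * h z - g z * h x)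
      + f z * (g x * h y - g y * h x) = 0"
    using f g h by (simp add: algebra_simps)
  with assms(2-) show ?thesis by simp
qed

lemma card_generators_ge_3:
  fixes G :: "'a::field ps3 set"
  assumes "finite G" and gen: "ps3_ideal G = ps3_ideal {h1, h2, h3}"
  shows "3 \<le> card G"
proof (rule ccontr)
  assume "\<not> 3 \<le> card G"
  then have "card G \<le> 2" by simp
  with \<open>finite G\<close> obtain p q where pq: "G \<subseteq> {p, q}"
    by (rule subset_doubleton_if_card_le_2)
  let ?M = "{(0, 1, 1), (0, 0, 3), (0, 4, 0)}"
  have below: "\<forall>s\<in>G. vanishes_below s m" if "m \<in> ?M" for m
  proof
    fix s assume "s \<in> G"
    then have "s \<in> ps3_ideal {h1, h2, h3}" using ps3_ideal_generator[of s G] gen by simp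
    then have "\<And>j. j \<le> 3 \<Longrightarrow> s (0, j, 0) = 0" "\<And>k. k \<le> 2 \<Longrightarrow> s (0, 0, k) = 0"
      by (simp_all add: ps3_ideal_h_vanishes_low)
    from vanishes_below_if_vanishes_low[of s, OF this] that show "vanishes_below s m" by auto
  qed
  have "\<exists>\<alpha> \<beta>. \<forall>m\<in>?M. h m = \<alpha> * p m + \<beta> * q m" if "h \<in> {h1, h2, h3}" for h
  proof -
    from that have "h \<in> ps3_ideal G" using ps3_ideal_generator[of h "{h1, h2, h3}"] gen by simp
    from ps3_ideal_linear_part[OF this pq] obtain \<alpha>
      where \<alpha>: "\<forall>m. (\<forall>s\<in>G. vanishes_below s m) \<longrightarrow> h m = (\<Sum>s\<in>{p, q}. \<alpha> s * s m)"
      by auto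
    show ?thesis
    proof (cases "p = q")
      case True
      with \<alpha> below show ?thesis by (intro exI[of _ "\<alpha> p"] exI[of _ 0]) auto
    next
      case False
      with \<alpha> below show ?thesis by (intro exI[of _ "\<alpha> p"] exI[of _ "\<alpha> q"]) auto
    qed
  qed
  then have "(0::'a) = 1"
    by (rule unit_vectors_not_in_span_of_two[where f=h1 and g=h2 and h=h3
          and x="(0, 1, 1)" and y="(0, 0, 3)" and z="(0, 4, 0)"])
       (simp_all add: h_values[unfolded One_nat_def])
  then show False by simp
qed

lemma three_eq_zero_if_CHAR_3:
  assumes "CHAR('a::comm_ring_1) = 3"
  shows "(3::'a) = 0"
  using of_nat_eq_0_iff_char_dvd[of 3, where ?'a='a] assms by simp

theorem mainTheorem7:
  assumes "CHAR('a::field) = 3"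
  shows "ps3_ideal {h1, h2, h3} = (Pker :: 'a ps3 set) \<and> mu3 (Pker :: 'a ps3 set) = 3"
proof
  show kernel: "ps3_ideal {h1, h2, h3} = (Pker :: 'a ps3 set)"
    using three_eq_zero_if_CHAR_3[OF assms] by (rule ps3_ideal_h_eq_Pker)
  show "mu3 (Pker :: 'a ps3 set) = 3"
    unfolding mu3_def
  proof (rule Least_equality)
    show "\<exists>G. finite G \<and> card G = 3 \<and> ps3_ideal G = (Pker :: 'a ps3 set)"
      using kernel h_distinct[where 'a='a] by (intro exI[of _ "{h1, h2, h3}"]) auto
  next
    fix n assume "\<exists>G. finite G \<and> card G = n \<and> ps3_ideal G = (Pker :: 'a ps3 set)"
    with kernel show "3 \<le> n" using card_generators_ge_3 by auto
  qed
qed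

end
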